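(* Let $\varphi:\mathbb{H}\to\mathbb{H}$ be a linear isometry with $\varphi(1)=1$. Then $\varphi(\varphi(x)x)=\varphi(x)x$ for all $x\in\mathbb{H}$ if and only if $\varphi\in\{I_{\mathbb{H}}\}\cup\mathcal{I}_1^-$. In particular $I_{\mathbb{H}}$ is the only proper linear isometry satisfying this condition.
   Context: $\mathbb{H}$ is the quaternions with Euclidean norm. $\mathcal{I}_1^-$ is the set of involutive linear isometries of $\mathbb{H}$ with negative determinant fixing $1$; equivalently $\mathcal{I}_1^-=\{\sigma_{\mathbb{H}}\}\cup\{x\mapsto a\bar x\bar a: a\in\mathrm{Im}(\mathbb{H}),\ |a|=1\}$, where $\sigma_{\mathbb{H}}(x)=\bar x$. A proper isometry is one with positive determinant. *)

theory Defs
  imports "HOL-Analysis.Analysis"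
begin

text \<open>The quaternions are modelled as Euclidean 4-space, coordinates
 (1, i, j, k) = components 1,2,3,4; the norm is the Euclidean norm.\<close>

type_synonym quat = "real^4"

definition qone :: quat where
  "qone = vector [1, 0, 0, 0]"

definition qmul :: "quat \<Rightarrow> quat \<Rightarrow> quat" where
  "qmul x y = vector
    [x$1*y$1 - x$2*y$2 - x$3*y$3 - x$4*y$4,
     x$1*y$2 + x$2*y$1 + x$3*y$4 - x$4*y$3,
     x$1*y$3 - x$2*y$4 + x$3*y$1 + x$4*y$2,
     x$1*y$4 + x$2*y$3 - x$3*y$2 + x$4*y$1]"

definition lin_isometry :: "(quat \<Rightarrow> quat) \<Rightarrow> bool" where
  "lin_isometry f \<longleftrightarrow> linear f \<and> (\<forall>x. norm (f x) = norm x)"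

definition I1_minus :: "(quat \<Rightarrow> quat) set" where
  "I1_minus = {f. lin_isometry f \<and> (\<forall>x. f (f x) = x) \<and> det (matrix f) < 0 \<and> f qone = qone}"

end

theory Submission
  imports Defs
begin

text \<open>Write \<open>\<phi>\<close> as \<open>diag(1, B)\<close> with \<open>B\<close> orthogonal on the imaginary quaternions.
 Polarising the condition at \<open>1 + x\<close> shows that it forces \<open>\<phi>\<close> to be an involution, so \<open>B\<close>
 is symmetric. For imaginary \<open>v\<close> the product \<open>\<phi>(v) v\<close> is \<open>-\<langle>\<phi> v, v\<rangle> + \<phi> v \<times> v\<close>, and the
 cofactor identity \<open>B (a \<times> b) = det B \<cdot> (B a \<times> B b)\<close> turns \<open>\<phi>(\<phi> v \<times> v)\<close> into
 \<open>-det \<phi> \<cdot> (\<phi> v \<times> v)\<close>. Hence the condition holds automatically when \<open>det \<phi> = -1\<close>, while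
 for \<open>det \<phi> = 1\<close> it says \<open>\<phi> v \<parallel> v\<close> for every imaginary \<open>v\<close>, so \<open>B\<close> is a scalar whose cube is 1.\<close>

lemma vector_4 [simp]:
 "(vector [x,y,z,w] ::('a::zero)^4)$1 = x"
 "(vector [x,y,z,w] ::('a::zero)^4)$2 = y"
 "(vector [x,y,z,w] ::('a::zero)^4)$3 = z"
 "(vector [x,y,z,w] ::('a::zero)^4)$4 = w"
  unfolding vector_def by simp_all

lemma qmul_add_left: "qmul (x + y) z = qmul x z + qmul y z"
  and qmul_add_right: "qmul z (x + y) = qmul z x + qmul z y"
  and qmul_scaleR_left: "qmul (c *\<^sub>R x) z = c *\<^sub>R qmul x z"
  and qmul_scaleR_right: "qmul z (c *\<^sub>R x) = c *\<^sub>R qmul z x"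
  and qmul_qone_left: "qmul qone x = x"
  and qmul_qone_right: "qmul x qone = x"
  by (simp_all add: vec_eq_iff forall_4 qmul_def qone_def algebra_simps)

definition qcross :: "quat \<Rightarrow> quat \<Rightarrow> quat" where
  "qcross u w = vector [0, u$3*w$4 - u$4*w$3, u$4*w$2 - u$2*w$4, u$2*w$3 - u$3*w$2]"

lemma qcross_anticommute: "qcross u w = - qcross w u"
  by (simp add: vec_eq_iff forall_4 qcross_def algebra_simps)

lemma qmul_imaginary:
  assumes "u$1 = 0" and "w$1 = 0"
  shows "qmul u w = (- (u \<bullet> w)) *\<^sub>R qone + qcross u w"
  using assms
  by (simp add: vec_eq_iff forall_4 qmul_def qone_def qcross_def inner_vec_def sum_4 algebra_simps)

definition one_block_matrix :: "real^4^4 \<Rightarrow> bool" where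
  "one_block_matrix M \<longleftrightarrow>
     (\<forall>k. M$1$k = (if k = 1 then 1 else 0) \<and> M$k$1 = (if k = 1 then 1 else 0))"

lemma det_one_block_matrix:
  assumes "one_block_matrix M"
  shows "det M =
    M$2$2 * M$3$3 * M$4$4 + M$2$3 * M$3$4 * M$4$2 + M$2$4 * M$3$2 * M$4$3 -
    M$2$2 * M$3$4 * M$4$3 - M$2$3 * M$3$2 * M$4$4 - M$2$4 * M$3$3 * M$4$2"
proof -
  have "finite {2::4, 3, 4}" "1 \<notin> {2::4, 3, 4}"
    and "finite {3::4, 4}" "2 \<notin> {3::4, 4}"
    and "finite {4::4}" "3 \<notin> {4::4}" by auto
  then show ?thesis
    using assms unfolding det_def UNIV_4 one_block_matrix_def
    by (simp add: sum_over_permutations_insert permutes_sing sign_swap_id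
        permutation_swap_id sign_compose sign_id swap_id_eq algebra_simps)
qed

lemma one_block_matrix_qcross:
  assumes "one_block_matrix M"
  shows "transpose M *v qcross (M *v u) (M *v w) = det M *\<^sub>R qcross u w"
  using assms unfolding det_one_block_matrix[OF assms]
  by (simp add: vec_eq_iff forall_4 qcross_def matrix_vector_mult_def sum_4
      transpose_def one_block_matrix_def algebra_simps)

lemma one_block_matrix_qone: "one_block_matrix M \<Longrightarrow> M *v qone = qone"
  by (simp add: vec_eq_iff forall_4 matrix_vector_mult_def sum_4 qone_def one_block_matrix_def)

lemma one_block_matrix_imaginary: "one_block_matrix M \<Longrightarrow> v$1 = 0 \<Longrightarrow> (M *v v)$1 = 0"
  by (simp add: matrix_vector_mult_def sum_4 one_block_matrix_def)

lemma orthogonal_matrix_fixing_qone: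
  assumes orth: "orthogonal_matrix M" and one: "M *v qone = qone"
  shows "one_block_matrix M"
proof -
  have col: "M$k$1 = (if k = 1 then 1 else 0)" for k
    using one exhaust_4[of k]
    by (auto simp: vec_eq_iff forall_4 matrix_vector_mult_def sum_4 qone_def)
  have row: "M$1$k = (if k = 1 then 1 else 0)" for k
  proof -
    have "(transpose M ** M)$1$k = (mat 1 :: real^4^4)$1$k"
      using orth by (simp add: orthogonal_matrix)
    then show ?thesis by (simp add: matrix_matrix_mult_def sum_4 transpose_def col mat_def)
  qed
  show ?thesis unfolding one_block_matrix_def using row col by simp
qed

lemma orthogonal_involution_symmetric:
  fixes M :: "real^'n^'n"
  assumes orth: "orthogonal_matrix M" and inv: "\<And>v. M *v (M *v v) = v"
  shows "transpose M = M"
proof -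
  have "M ** M = mat 1"
    using inv by (simp add: matrix_eq matrix_vector_mul_assoc[symmetric])
  then have "transpose M = transpose M ** (M ** M)" by simp
  also have "\<dots> = M"
    using orth by (simp add: matrix_mul_assoc orthogonal_matrix)
  finally show ?thesis .
qed

lemma involution_qcross:
  assumes block: "one_block_matrix M" and sym: "transpose M = M" and inv: "\<And>v. M *v (M *v v) = v"
  shows "M *v qcross (M *v v) v = - (det M *\<^sub>R qcross (M *v v) v)"
proof -
  have "M *v qcross (M *v v) v = transpose M *v qcross (M *v v) (M *v (M *v v))"
    using sym inv by simp
  also have "\<dots> = det M *\<^sub>R qcross v (M *v v)"
    by (rule one_block_matrix_qcross[OF block])
  finally show ?thesis using qcross_anticommute[of v "M *v v"] by simp
qed

lemma qmul_fixed_imaginary_iff: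
  assumes block: "one_block_matrix M" and "v$1 = 0"
  shows "M *v qmul (M *v v) v = qmul (M *v v) v \<longleftrightarrow> M *v qcross (M *v v) v = qcross (M *v v) v"
  unfolding qmul_imaginary[OF one_block_matrix_imaginary[OF block \<open>v$1 = 0\<close>] \<open>v$1 = 0\<close>]
  by (simp add: matrix_vector_mult_diff_distrib matrix_vector_mult_scaleR one_block_matrix_qone[OF block])

lemma qmul_fixed_of_imaginary:
  assumes block: "one_block_matrix M" and inv: "\<And>v. M *v (M *v v) = v"
    and imag: "\<And>v. v$1 = 0 \<Longrightarrow> M *v qmul (M *v v) v = qmul (M *v v) v"
  shows "M *v qmul (M *v x) x = qmul (M *v x) x"
proof -
  define a v where "a = x$1" and "v = x - a *\<^sub>R qone"
  have x: "x = a *\<^sub>R qone + v" and "v$1 = 0"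
    by (simp_all add: v_def a_def qone_def)
  have M1: "M *v qone = qone" using one_block_matrix_qone[OF block] .
  have prod: "qmul (M *v x) x = (a*a) *\<^sub>R qone + a *\<^sub>R v + a *\<^sub>R (M *v v) + qmul (M *v v) v"
    unfolding x
    by (simp add: matrix_vector_right_distrib matrix_vector_mult_scaleR M1 qmul_add_left
        qmul_add_right qmul_scaleR_left qmul_scaleR_right qmul_qone_left qmul_qone_right
        scaleR_add_right algebra_simps)
  show ?thesis
    unfolding prod
    by (simp add: matrix_vector_right_distrib matrix_vector_mult_scaleR M1 inv imag[OF \<open>v$1 = 0\<close>])
qed

lemma qcross_parallel_imp_id:
  assumes block: "one_block_matrix M" and det: "det M = 1"
    and par: "\<And>v. v$1 = 0 \<Longrightarrow> qcross (M *v v) v = 0"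
  shows "M = mat 1"
proof -
  note simps = vec_eq_iff forall_4 qcross_def matrix_vector_mult_def sum_4
  have "M$1$2 = 0" "M$1$3 = 0" "M$1$4 = 0" "M$2$1 = 0" "M$3$1 = 0" "M$4$1 = 0" "M$1$1 = 1"
    using block by (simp_all add: one_block_matrix_def)
  moreover have "M$3$2 = 0" "M$4$2 = 0" using par[of "vector [0,1,0,0]"] by (simp_all add: simps)
  moreover have "M$2$3 = 0" "M$4$3 = 0" using par[of "vector [0,0,1,0]"] by (simp_all add: simps)
  moreover have "M$2$4 = 0" "M$3$4 = 0" using par[of "vector [0,0,0,1]"] by (simp_all add: simps)
  moreover have "M$3$3 = M$2$2" using calculation par[of "vector [0,1,1,0]"] by (simp add: simps)
  moreover have "M$4$4 = M$2$2" using calculation par[of "vector [0,1,0,1]"] by (simp add: simps)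
  moreover have "M$2$2 = 1"
  proof -
    have "M$2$2 ^ 3 = 1"
      using det det_one_block_matrix[OF block] calculation by (simp add: power3_eq_cube)
    then show ?thesis using odd_real_root_unique[of 3 "M$2$2" 1] by simp
  qed
  ultimately show ?thesis by (simp add: vec_eq_iff forall_4 mat_def)
qed

lemma qmul_fixed_imp_involution:
  assumes lin: "linear \<phi>" and one: "\<phi> qone = qone"
    and fixed: "\<And>x. \<phi> (qmul (\<phi> x) x) = qmul (\<phi> x) x"
  shows "\<phi> (\<phi> v) = v"
proof -
  have "qmul (\<phi> (qone + v)) (qone + v) = qone + v + \<phi> v + qmul (\<phi> v) v"
    using one by (simp add: linear_add[OF lin] qmul_add_left qmul_add_right qmul_qone_left qmul_qone_right)
  moreover have "\<phi> (qone + v + \<phi> v + qmul (\<phi> v) v) = qone + \<phi> v + \<phi> (\<phi> v) + qmul (\<phi> v) v"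
    using one fixed[of v] by (simp add: linear_add[OF lin])
  ultimately show ?thesis using fixed[of "qone + v"] by (simp add: algebra_simps)
qed

lemma qmul_fixed_if_det_neg:
  assumes block: "one_block_matrix M" and orth: "orthogonal_matrix M"
    and inv: "\<And>v. M *v (M *v v) = v" and det: "det M = -1"
  shows "M *v qmul (M *v x) x = qmul (M *v x) x"
  using qmul_fixed_of_imaginary[OF block inv] qmul_fixed_imaginary_iff[OF block]
    involution_qcross[OF block orthogonal_involution_symmetric[OF orth inv] inv] det
  by simp

lemma qmul_fixed_det_one_imp_id:
  assumes block: "one_block_matrix M" and orth: "orthogonal_matrix M" and det: "det M = 1"
    and fixed: "\<And>x. M *v qmul (M *v x) x = qmul (M *v x) x"
  shows "M = mat 1"
proof -
  have inv: "M *v (M *v v) = v" for v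
    using qmul_fixed_imp_involution[of "(*v) M"] fixed one_block_matrix_qone[OF block]
    by (simp add: matrix_vector_mul_linear)
  have "qcross (M *v v) v = 0" if "v$1 = 0" for v
  proof -
    have "M *v qcross (M *v v) v = qcross (M *v v) v"
      using fixed qmul_fixed_imaginary_iff[OF block that] by simp
    then have "qcross (M *v v) v = - qcross (M *v v) v"
      using involution_qcross[OF block orthogonal_involution_symmetric[OF orth inv] inv] det
      by simp
    then show ?thesis by (simp add: vec_eq_iff)
  qed
  then show ?thesis using qcross_parallel_imp_id[OF block det] by blast
qed

theorem lemma8:
  fixes \<phi> :: "quat \<Rightarrow> quat"
  assumes "lin_isometry \<phi>" and "\<phi> qone = qone"
  shows "((\<forall>x. \<phi> (qmul (\<phi> x) x) = qmul (\<phi> x) x) \<longleftrightarrow> (\<phi> = id \<or> \<phi> \<in> I1_minus))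
       \<and> ((det (matrix \<phi>) > 0 \<and> (\<forall>x. \<phi> (qmul (\<phi> x) x) = qmul (\<phi> x) x)) \<longleftrightarrow> \<phi> = id)"
proof -
  define M where "M = matrix \<phi>"
  have "orthogonal_transformation \<phi>"
    using assms(1) unfolding lin_isometry_def orthogonal_transformation by simp
  then have orth: "orthogonal_matrix M" and \<phi>_M: "\<phi> = (*v) M"
    unfolding M_def using orthogonal_transformation_matrix by (blast, force)
  have block: "one_block_matrix M"
    using orthogonal_matrix_fixing_qone[OF orth] assms(2) \<phi>_M by simp
  have det: "det M = 1 \<or> det M = -1" using det_orthogonal_matrix[OF orth] .
  have inv: "\<phi> (\<phi> v) = v" if "\<forall>x. \<phi> (qmul (\<phi> x) x) = qmul (\<phi> x) x" for v
    using qmul_fixed_imp_involution assms that unfolding lin_isometry_def by blast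
  have "\<phi> = id" if "\<forall>x. \<phi> (qmul (\<phi> x) x) = qmul (\<phi> x) x" and "det M = 1"
    using qmul_fixed_det_one_imp_id[OF block orth] that \<phi>_M by (auto simp: fun_eq_iff)
  moreover have "\<forall>x. \<phi> (qmul (\<phi> x) x) = qmul (\<phi> x) x" if "\<phi> \<in> I1_minus"
    using qmul_fixed_if_det_neg[OF block orth] that det \<phi>_M unfolding I1_minus_def M_def by auto
  ultimately show ?thesis
    using det inv assms unfolding I1_minus_def M_def by (auto simp: matrix_id_mat_1)
qed

end
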